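(* Let $\Phi_1,\Phi_2$ be doubling Young functions such that $\int^\infty\frac{dt}{\Phi_i(t)}<\infty$ for $i=1,2$. Then there exists a doubling Young function $\Phi$ with the following properties: - $\Phi(t)\le\min\{\Phi_1(t),\Phi_2(t)\}$ for all $t$; - $\int^\infty\frac{dt}{\Phi(t)}<\infty$; - there exists $c>0$ such that $\Phi(t)\ge c\min\{\Phi_1(t),\Phi_2(t)\}$ for all sufficiently large $t$.
   Context: A Young function is a convex increasing function $\Phi:[0,\infty)\to[0,\infty)$ with $\Phi(0)=0$. It is doubling if there is $C<\infty$ with $\Phi(2t)\le C\Phi(t)$ for all sufficiently large $t$. *)

theory Defs
  imports "HOL-Analysis.Analysis"
begin

text \<open>Young function on [0,\<infinity>): convex, nondecreasing, nonnegative, vanishing at 0.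
  Functions are modelled as real \<Rightarrow> real; values on negative reals are irrelevant.\<close>
definition young_function :: "(real \<Rightarrow> real) \<Rightarrow> bool" where
  "young_function \<Phi> \<longleftrightarrow> \<Phi> 0 = 0 \<and> (\<forall>t\<ge>0. \<Phi> t \<ge> 0) \<and>
     convex_on {0..} \<Phi> \<and> mono_on {0..} \<Phi>"

definition doubling :: "(real \<Rightarrow> real) \<Rightarrow> bool" where
  "doubling \<Phi> \<longleftrightarrow> (\<exists>C. \<forall>\<^sub>F t in at_top. \<Phi> (2 * t) \<le> C * \<Phi> t)"

text \<open>The integral of 1/\<Phi> converges at infinity (with \<Phi> positive there, so the
  integrand is genuinely defined).\<close>
definition finite_inv_integral :: "(real \<Rightarrow> real) \<Rightarrow> bool" where
  "finite_inv_integral \<Phi> \<longleftrightarrow>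
     (\<exists>a. (\<forall>t\<ge>a. \<Phi> t > 0) \<and> (\<lambda>t. 1 / \<Phi> t) integrable_on {a..})"

end

theory Submission
  imports Defs
begin

text \<open>Take for \<open>\<Phi>\<close> the infimal convolution
  \<open>(\<Phi>1 \<box> \<Phi>2)(t) = inf {\<Phi>1 s + \<Phi>2 (t - s) | 0 \<le> s \<le> t}\<close>. It is again a Young function,
  and it lies below \<open>min \<Phi>1 \<Phi>2\<close> (split off all of \<open>t\<close> or nothing). Conversely one part of
  every splitting is at least \<open>t/2\<close>, so \<open>(\<Phi>1 \<box> \<Phi>2)(t) \<ge> min \<Phi>1 \<Phi>2 (t/2)\<close>, which by doubling is
  at least \<open>min \<Phi>1 \<Phi>2 (t) / D\<close>. Thus \<open>\<Phi>1 \<box> \<Phi>2\<close> is comparable to \<open>min \<Phi>1 \<Phi>2\<close>, which is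
  doubling and satisfies \<open>1 / min \<Phi>1 \<Phi>2 \<le> 1 / \<Phi>1 + 1 / \<Phi>2\<close>.\<close>

lemma young_function_nonneg: "young_function f \<Longrightarrow> 0 \<le> t \<Longrightarrow> 0 \<le> f t"
  unfolding young_function_def by blast

lemma young_function_eventually_nonneg: "young_function f \<Longrightarrow> \<forall>\<^sub>F t in at_top. 0 \<le> f t"
  using eventually_ge_at_top[of 0] by eventually_elim (rule young_function_nonneg)

lemma young_function_continuous_on: "young_function f \<Longrightarrow> continuous_on {0<..} f"
  unfolding young_function_def
  by (intro convex_on_continuous) (auto intro: convex_on_subset)

definition inf_convolution :: "(real \<Rightarrow> real) \<Rightarrow> (real \<Rightarrow> real) \<Rightarrow> real \<Rightarrow> real" where
  "inf_convolution f g t = Inf ((\<lambda>s. f s + g (t - s)) ` {0..t})"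

lemma inf_convolution_greatest:
  "0 \<le> t \<Longrightarrow> (\<And>s. 0 \<le> s \<Longrightarrow> s \<le> t \<Longrightarrow> B \<le> f s + g (t - s)) \<Longrightarrow> B \<le> inf_convolution f g t"
  unfolding inf_convolution_def by (rule cInf_greatest) auto

context
  fixes f g :: "real \<Rightarrow> real"
  assumes f_nonneg: "\<And>t. 0 \<le> t \<Longrightarrow> 0 \<le> f t" and g_nonneg: "\<And>t. 0 \<le> t \<Longrightarrow> 0 \<le> g t"
begin

lemma inf_convolution_le: "0 \<le> s \<Longrightarrow> s \<le> t \<Longrightarrow> inf_convolution f g t \<le> f s + g (t - s)"
  unfolding inf_convolution_def
  by (rule cInf_lower) (auto intro!: bdd_belowI[where m = 0] add_nonneg_nonneg f_nonneg g_nonneg)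

lemma inf_convolution_nonneg: "0 \<le> t \<Longrightarrow> 0 \<le> inf_convolution f g t"
  by (rule inf_convolution_greatest) (auto intro!: add_nonneg_nonneg f_nonneg g_nonneg)

lemma inf_convolution_approx:
  assumes "0 \<le> t" "0 < e"
  obtains s where "0 \<le> s" "s \<le> t" "f s + g (t - s) < inf_convolution f g t + e"
proof -
  have "\<not> inf_convolution f g t + e \<le> inf_convolution f g t"
    using assms(2) by simp
  then show ?thesis
    using that inf_convolution_greatest[OF assms(1), of "inf_convolution f g t + e" f g]
    by (meson not_less)
qed

lemma convex_on_inf_convolution:
  assumes f: "convex_on {0..} f" and g: "convex_on {0..} g"
  shows "convex_on {0..} (inf_convolution f g)"
proof (rule convex_onI)
  fix u x y :: real
  assume u: "0 < u" "u < 1" and "x \<in> {0..}" "y \<in> {0..}"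
  then have x: "0 \<le> x" and y: "0 \<le> y" by auto
  show "inf_convolution f g ((1 - u) *\<^sub>R x + u *\<^sub>R y) \<le> (1 - u) * inf_convolution f g x + u * inf_convolution f g y"
  proof (rule field_le_epsilon)
    fix e :: real assume e: "0 < e"
    obtain sx where sx: "0 \<le> sx" "sx \<le> x" "f sx + g (x - sx) < inf_convolution f g x + e"
      using inf_convolution_approx[OF x e] .
    obtain sy where sy: "0 \<le> sy" "sy \<le> y" "f sy + g (y - sy) < inf_convolution f g y + e"
      using inf_convolution_approx[OF y e] .
    define s where "s = (1 - u) * sx + u * sy"
    define z where "z = (1 - u) * x + u * y"
    have z_minus_s: "z - s = (1 - u) * (x - sx) + u * (y - sy)"
      unfolding s_def z_def by algebra
    have "0 \<le> s" "s \<le> z"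
      unfolding s_def z_def using u sx sy by (auto intro!: add_mono mult_left_mono)
    then have "inf_convolution f g z \<le> f s + g (z - s)" by (rule inf_convolution_le)
    also have "f s \<le> (1 - u) * f sx + u * f sy"
      using convex_onD[OF f, of u sx sy] u sx sy unfolding s_def by (simp add: algebra_simps)
    also have "g (z - s) \<le> (1 - u) * g (x - sx) + u * g (y - sy)"
      using convex_onD[OF g, of u "x - sx" "y - sy"] u sx sy unfolding z_minus_s by (simp add: algebra_simps)
    also have "(1 - u) * f sx + u * f sy + ((1 - u) * g (x - sx) + u * g (y - sy))
        = (1 - u) * (f sx + g (x - sx)) + u * (f sy + g (y - sy))" by algebra
    also have "\<dots> \<le> (1 - u) * (inf_convolution f g x + e) + u * (inf_convolution f g y + e)"
      using u sx(3) sy(3) by (intro add_mono[OF mult_left_mono mult_left_mono]) auto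
    finally show "inf_convolution f g ((1 - u) *\<^sub>R x + u *\<^sub>R y)
        \<le> (1 - u) * inf_convolution f g x + u * inf_convolution f g y + e"
      unfolding z_def by (simp add: algebra_simps)
  qed
qed (simp add: convex_real_interval)

context
  assumes f_mono: "mono_on {0..} f" and g_mono: "mono_on {0..} g"
begin

lemma mono_on_inf_convolution: "mono_on {0..} (inf_convolution f g)"
proof (rule mono_onI)
  fix t t' :: real assume "t \<in> {0..}" "t \<le> t'"
  then have t: "0 \<le> t" "t \<le> t'" by auto
  show "inf_convolution f g t \<le> inf_convolution f g t'"
  proof (rule inf_convolution_greatest)
    fix s assume s: "0 \<le> s" "s \<le> t'"
    show "inf_convolution f g t \<le> f s + g (t' - s)"
    proof (cases "s \<le> t")
      case True
      then have "inf_convolution f g t \<le> f s + g (t - s)" using s by (intro inf_convolution_le)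
      also have "g (t - s) \<le> g (t' - s)" using True t by (intro mono_onD[OF g_mono]) auto
      finally show ?thesis by simp
    next
      case False
      then have "inf_convolution f g t \<le> f t + g (t - t)" using t by (intro inf_convolution_le) auto
      also have "f t \<le> f s" using False t by (intro mono_onD[OF f_mono]) auto
      also have "g (t - t) \<le> g (t' - s)" using s by (intro mono_onD[OF g_mono]) auto
      finally show ?thesis by simp
    qed
  qed (use t in simp)
qed

lemma min_half_le_inf_convolution:
  assumes "0 \<le> t" shows "min (f (t/2)) (g (t/2)) \<le> inf_convolution f g t"
proof (rule inf_convolution_greatest[OF assms])
  fix s assume s: "0 \<le> s" "s \<le> t"
  show "min (f (t/2)) (g (t/2)) \<le> f s + g (t - s)"
  proof (cases "t/2 \<le> s")
    case True
    then have "f (t/2) \<le> f s" using s by (intro mono_onD[OF f_mono]) auto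
    then show ?thesis using g_nonneg[of "t - s"] s by linarith
  next
    case False
    then have "g (t/2) \<le> g (t - s)" using s by (intro mono_onD[OF g_mono]) auto
    then show ?thesis using f_nonneg[of s] s by linarith
  qed
qed

end

end

lemma inf_convolution_le_min:
  assumes "young_function f" "young_function g" "0 \<le> t"
  shows "inf_convolution f g t \<le> min (f t) (g t)"
  using inf_convolution_le[of f g t t] inf_convolution_le[of f g 0 t] assms
  by (simp add: young_function_nonneg young_function_def)

lemma young_function_inf_convolution:
  assumes "young_function f" "young_function g"
  shows "young_function (inf_convolution f g)"
proof -
  have "inf_convolution f g 0 = 0"
    using inf_convolution_nonneg[of f g 0] inf_convolution_le_min[OF assms order_refl] assms
    by (simp add: young_function_def)
  then show ?thesis
    using assms inf_convolution_nonneg[of f g] convex_on_inf_convolution[of f g]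
      mono_on_inf_convolution[of f g]
    unfolding young_function_def by auto
qed

lemma filterlim_at_top_mult_const: "0 < c \<Longrightarrow> filterlim (\<lambda>t::real. c * t) at_top at_top"
  by (rule filterlim_tendsto_pos_mult_at_top[OF tendsto_const _ filterlim_ident])

lemma doublingE:
  assumes "doubling f" "\<forall>\<^sub>F t in at_top. 0 \<le> f t"
  obtains C where "1 \<le> C" "\<forall>\<^sub>F t in at_top. f (2 * t) \<le> C * f t"
proof -
  obtain C where "\<forall>\<^sub>F t in at_top. f (2 * t) \<le> C * f t"
    using assms(1) unfolding doubling_def by blast
  with assms(2) have "\<forall>\<^sub>F t in at_top. f (2 * t) \<le> max 1 C * f t"
    by eventually_elim (meson max.cobounded2 mult_right_mono order_trans)
  then show ?thesis using that[of "max 1 C"] by simp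
qed

lemma doubling_min:
  assumes "doubling f" "doubling g" "\<forall>\<^sub>F t in at_top. 0 \<le> f t" "\<forall>\<^sub>F t in at_top. 0 \<le> g t"
  shows "doubling (\<lambda>t. min (f t) (g t))"
proof -
  obtain C where C: "1 \<le> C" "\<forall>\<^sub>F t in at_top. f (2 * t) \<le> C * f t"
    using doublingE[OF assms(1,3)] .
  obtain D where D: "1 \<le> D" "\<forall>\<^sub>F t in at_top. g (2 * t) \<le> D * g t"
    using doublingE[OF assms(2,4)] .
  have "\<forall>\<^sub>F t in at_top. min (f (2 * t)) (g (2 * t)) \<le> max C D * min (f t) (g t)"
    using C(2) D(2) assms(3,4)
  proof eventually_elim
    case (elim t)
    have "C * f t \<le> max C D * f t" "D * g t \<le> max C D * g t"
      using elim(3,4) by (simp_all add: mult_right_mono)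
    with elim(1,2) show ?case by (auto simp: min_mult_distrib_left C(1) D(1))
  qed
  then show ?thesis unfolding doubling_def by blast
qed

lemma doubling_if_comparable:
  assumes "doubling m" "\<forall>\<^sub>F t in at_top. 0 \<le> h t"
    and "\<forall>\<^sub>F t in at_top. h t \<le> m t" "\<forall>\<^sub>F t in at_top. m t \<le> D * h t"
  shows "doubling h"
proof -
  have "\<forall>\<^sub>F t in at_top. 0 \<le> m t"
    using assms(2,3) by eventually_elim simp
  then obtain C where C: "1 \<le> C" "\<forall>\<^sub>F t in at_top. m (2 * t) \<le> C * m t"
    using doublingE[OF assms(1)] by blast
  have "\<forall>\<^sub>F t in at_top. h (2 * t) \<le> m (2 * t)"
    using eventually_compose_filterlim[OF assms(3) filterlim_at_top_mult_const] by simp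
  with C(2) assms(4) have "\<forall>\<^sub>F t in at_top. h (2 * t) \<le> (C * D) * h t"
  proof eventually_elim
    case (elim t)
    then have "C * m t \<le> C * (D * h t)" using C(1) by (intro mult_left_mono) auto
    with elim show ?case by (simp add: mult.assoc)
  qed
  then show ?thesis unfolding doubling_def by blast
qed

lemma min_le_const_mult_inf_convolution:
  assumes f: "young_function f" "doubling f" and g: "young_function g" "doubling g"
  obtains D where "1 \<le> D" "\<forall>\<^sub>F t in at_top. min (f t) (g t) \<le> D * inf_convolution f g t"
proof -
  have nonneg: "\<forall>\<^sub>F t in at_top. 0 \<le> min (f t) (g t)"
    using young_function_eventually_nonneg[OF f(1)] young_function_eventually_nonneg[OF g(1)]
    by eventually_elim simp
  have "doubling (\<lambda>t. min (f t) (g t))"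
    using f g by (intro doubling_min young_function_eventually_nonneg)
  then obtain D where D: "1 \<le> D" "\<forall>\<^sub>F t in at_top. min (f (2 * t)) (g (2 * t)) \<le> D * min (f t) (g t)"
    using doublingE nonneg by blast
  have "\<forall>\<^sub>F t in at_top. min (f t) (g t) \<le> D * min (f (t/2)) (g (t/2))"
    using eventually_compose_filterlim[OF D(2) filterlim_at_top_mult_const[of "1/2"]] by simp
  with eventually_ge_at_top[of 0]
  have "\<forall>\<^sub>F t in at_top. min (f t) (g t) \<le> D * inf_convolution f g t"
  proof eventually_elim
    case (elim t)
    have "min (f (t/2)) (g (t/2)) \<le> inf_convolution f g t"
      using min_half_le_inf_convolution[of f g t] f(1) g(1) elim(1)
      by (simp add: young_function_def)
    with elim(2) D(1) show ?case by (meson mult_left_mono order_trans zero_le_one)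
  qed
  with D(1) that show ?thesis by blast
qed

lemma finite_inv_integral_eventually_integrable:
  assumes "finite_inv_integral f"
  shows "\<forall>\<^sub>F a in at_top. (\<lambda>t. 1 / f t) integrable_on {a..}"
proof -
  obtain a0 where pos: "\<And>t. a0 \<le> t \<Longrightarrow> 0 < f t" and int: "(\<lambda>t. 1 / f t) integrable_on {a0..}"
    using assms unfolding finite_inv_integral_def by blast
  have abs_int: "(\<lambda>t. 1 / f t) absolutely_integrable_on {a0..}"
    using int pos by (intro nonnegative_absolutely_integrable_1) (auto simp: less_imp_le)
  then have "(\<lambda>t. 1 / f t) integrable_on {a..}" if "a0 \<le> a" for a
  proof -
    have "(\<lambda>t. 1 / f t) absolutely_integrable_on {a..}"
      by (rule set_integrable_subset[OF abs_int]) (use that in auto)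
    then show ?thesis by (rule set_lebesgue_integral_eq_integral(1))
  qed
  then show ?thesis unfolding eventually_at_top_linorder by blast
qed

lemma finite_inv_integral_if_min_le:
  assumes f: "finite_inv_integral f" and g: "finite_inv_integral g"
    and h: "continuous_on {0<..} h" and D: "0 < D"
    and min_le: "\<forall>\<^sub>F t in at_top. min (f t) (g t) \<le> D * h t"
  shows "finite_inv_integral h"
proof -
  have "\<forall>\<^sub>F t in at_top. 0 < f t" "\<forall>\<^sub>F t in at_top. 0 < g t"
    using f g unfolding finite_inv_integral_def eventually_at_top_linorder by blast+
  with min_le have "\<forall>\<^sub>F t in at_top. 0 < f t \<and> 0 < g t \<and> min (f t) (g t) \<le> D * h t"
    by eventually_elim simp
  then have "\<forall>\<^sub>F a in at_top. \<forall>t\<ge>a. 0 < f t \<and> 0 < g t \<and> min (f t) (g t) \<le> D * h t"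
    by (rule eventually_all_ge_at_top)
  with eventually_gt_at_top[of 0] finite_inv_integral_eventually_integrable[OF f]
    finite_inv_integral_eventually_integrable[OF g]
  have "\<forall>\<^sub>F a in at_top. 0 < a \<and> (\<lambda>t. 1 / f t) integrable_on {a..} \<and> (\<lambda>t. 1 / g t) integrable_on {a..}
      \<and> (\<forall>t\<ge>a. 0 < f t \<and> 0 < g t \<and> min (f t) (g t) \<le> D * h t)"
    by eventually_elim blast
  then obtain a where a: "0 < a" "(\<lambda>t. 1 / f t) integrable_on {a..}" "(\<lambda>t. 1 / g t) integrable_on {a..}"
    and pointwise: "\<And>t. a \<le> t \<Longrightarrow> 0 < f t \<and> 0 < g t \<and> min (f t) (g t) \<le> D * h t"
    by (auto simp: eventually_at_top_linorder)
  have h_pos: "0 < h t" if "a \<le> t" for t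
  proof -
    have "0 < min (f t) (g t)" using pointwise[OF that] by simp
    also have "\<dots> \<le> D * h t" using pointwise[OF that] by simp
    finally have "0 < D * h t" .
    then show ?thesis using D by (rule zero_less_mult_pos)
  qed
  have bound: "1 / h t \<le> D * (1 / f t + 1 / g t)" if "a \<le> t" for t
  proof -
    have "1 / h t \<le> D / min (f t) (g t)"
      using pointwise[OF that] h_pos[OF that] D by (simp add: field_simps)
    also have "\<dots> \<le> D * (1 / f t + 1 / g t)"
      using pointwise[OF that] D by (auto simp: min_def field_simps)
    finally show ?thesis .
  qed
  have meas: "(\<lambda>t. 1 / h t) \<in> borel_measurable (lebesgue_on {a..})"
    using h h_pos a(1)
    by (intro continuous_imp_measurable_on_sets_lebesgue continuous_intros)
       (auto elim: continuous_on_subset simp: less_imp_neq[symmetric])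
  have dominant: "(\<lambda>t. D * (1 / f t + 1 / g t)) integrable_on {a..}"
    using integrable_cmul[OF integrable_add[OF a(2,3)], of D] by simp
  have "(\<lambda>t. 1 / h t) integrable_on {a..}"
    by (rule measurable_bounded_by_integrable_imp_integrable_real[OF meas dominant])
       (use bound h_pos in \<open>auto simp: less_imp_le\<close>)
  with h_pos show ?thesis unfolding finite_inv_integral_def by blast
qed

theorem lemma3p5:
  fixes \<Phi>1 \<Phi>2 :: "real \<Rightarrow> real"
  assumes "young_function \<Phi>1" "doubling \<Phi>1" "finite_inv_integral \<Phi>1"
      and "young_function \<Phi>2" "doubling \<Phi>2" "finite_inv_integral \<Phi>2"
  shows "\<exists>\<Phi>. young_function \<Phi> \<and> doubling \<Phi> \<and>
           (\<forall>t\<ge>0. \<Phi> t \<le> min (\<Phi>1 t) (\<Phi>2 t)) \<and>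
           finite_inv_integral \<Phi> \<and>
           (\<exists>c>0. \<forall>\<^sub>F t in at_top. \<Phi> t \<ge> c * min (\<Phi>1 t) (\<Phi>2 t))"
proof -
  define \<Phi> where "\<Phi> = inf_convolution \<Phi>1 \<Phi>2"
  have young: "young_function \<Phi>"
    unfolding \<Phi>_def using assms(1,4) by (rule young_function_inf_convolution)
  have upper: "\<forall>t\<ge>0. \<Phi> t \<le> min (\<Phi>1 t) (\<Phi>2 t)"
    unfolding \<Phi>_def using inf_convolution_le_min assms(1,4) by blast
  obtain D where D: "1 \<le> D" "\<forall>\<^sub>F t in at_top. min (\<Phi>1 t) (\<Phi>2 t) \<le> D * \<Phi> t"
    unfolding \<Phi>_def using min_le_const_mult_inf_convolution[OF assms(1,2,4,5)] by blast
  have "doubling \<Phi>"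
  proof (rule doubling_if_comparable[OF _ young_function_eventually_nonneg[OF young] _ D(2)])
    show "doubling (\<lambda>t. min (\<Phi>1 t) (\<Phi>2 t))"
      using assms by (intro doubling_min young_function_eventually_nonneg)
    show "\<forall>\<^sub>F t in at_top. \<Phi> t \<le> min (\<Phi>1 t) (\<Phi>2 t)"
      using eventually_ge_at_top[of 0] by eventually_elim (use upper in blast)
  qed
  moreover have "finite_inv_integral \<Phi>"
    using assms(3,6) young_function_continuous_on[OF young] _ D(2)
    by (rule finite_inv_integral_if_min_le) (use D(1) in simp)
  moreover have "\<forall>\<^sub>F t in at_top. 1 / D * min (\<Phi>1 t) (\<Phi>2 t) \<le> \<Phi> t"
    using D(2) by eventually_elim (use D(1) in \<open>simp add: field_simps\<close>)
  ultimately show ?thesis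
    using young upper D(1) by (intro exI[of _ \<Phi>]) (auto intro!: exI[of _ "1 / D"])
qed

end
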